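(* Let $\mathcal{A},\mathcal{B}$ be symmetric real $m$-th order $n$-dimensional tensors ($n=n_1+\cdots+n_r$) with $\mathcal{A}$ strictly $\mathcal{K}$-positive, i.e. $\mathcal{A}x^m>0$ for all $x\in\mathcal{K}\setminus\{0\}$. Let $\bar x$ be a stationary point of the problem $$\max\ \lambda(x):=\frac{\mathcal{B}x^m}{\mathcal{A}x^m}\quad\text{s.t.}\quad (x^i_\circ)^2-\|x^i_\bullet\|^2\ge 0,\ x^i_\circ\ge 0\ (i=1,\ldots,r),\quad e^\top x=1.$$ Then $(\bar x,\lambda(\bar x))$ is a solution of the second-order cone tensor eigenvalue complementarity problem, i.e. $\bar x\neq0$, $\bar x\in\mathcal{K}$, $\bar w:=(\lambda(\bar x)\mathcal{A}-\mathcal{B})\bar x^{m-1}\in\mathcal{K}$ and $\langle\bar x,\bar w\rangle=0$.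
   Context: A real $m$-th order $n$-dimensional tensor is an array $\mathcal{A}=(a_{i_1\ldots i_m})$; it is symmetric if its entries are invariant under any permutation of the indices. For $x\in\mathbb{R}^n$, $\mathcal{A}x^{m-1}\in\mathbb{R}^n$ has $i$-th component $\sum_{i_2,\ldots,i_m} a_{ii_2\ldots i_m}x_{i_2}\cdots x_{i_m}$ and $\mathcal{A}x^m=\sum_{i_1,\ldots,i_m} a_{i_1\ldots i_m}x_{i_1}\cdots x_{i_m}$. Vectors are written $x=(x^1,\ldots,x^r)\in\mathbb{R}^{n_1}\times\cdots\times\mathbb{R}^{n_r}$ with $x^i=(x^i_\circ,x^i_\bullet)\in\mathbb{R}\times\mathbb{R}^{n_i-1}$. $\mathcal{K}=\mathcal{K}^{n_1}\times\cdots\times\mathcal{K}^{n_r}$ with $\mathcal{K}^{n_i}=\{x^i: x^i_\circ\ge\|x^i_\bullet\|\}$. $e=(e^1,\ldots,e^r)$ with $e^i=(1,0,\ldots,0)^\top\in\mathbb{R}^{n_i}$. A stationary point of the maximization problem is a feasible point $\bar x$ satisfying the KKT conditions: there exist $\beta,\gamma\in\mathbb{R}^r_+$ and $\delta\in\mathbb{R}$ with $\nabla\lambda(\bar x)+\sum_i\beta_i\nabla g_i(\bar x)+\sum_i\gamma_i\nabla h_i(\bar x)+\delta e=0$, $\beta_i g_i(\bar x)=0$, $\gamma_i h_i(\bar x)=0$, where $g_i(x)=(x^i_\circ)^2-\|x^i_\bullet\|^2$ and $h_i(x)=x^i_\circ$. *)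

theory Defs
  imports "HOL-Analysis.Analysis"
begin

text \<open>An m-th order n-dimensional real tensor is a function
  from index lists to reals; only lists of length m with entries < n matter.
  Vectors of R^n are functions nat => real; only components 0..n-1 matter.\<close>

type_synonym tensor = "nat list \<Rightarrow> real"
type_synonym vec = "nat \<Rightarrow> real"

definition idx :: "nat \<Rightarrow> nat \<Rightarrow> nat list set" where
  "idx k n = {is. length is = k \<and> set is \<subseteq> {..<n}}"

definition symmetric_tensor :: "nat \<Rightarrow> nat \<Rightarrow> tensor \<Rightarrow> bool" where
  "symmetric_tensor m n A \<longleftrightarrow>
     (\<forall>is\<in>idx m n. \<forall>js\<in>idx m n. mset is = mset js \<longrightarrow> A is = A js)"

definition tpow :: "nat \<Rightarrow> nat \<Rightarrow> tensor \<Rightarrow> vec \<Rightarrow> real" where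
  "tpow m n A x = (\<Sum>is\<in>idx m n. A is * prod_list (map x is))"

definition tvec :: "nat \<Rightarrow> nat \<Rightarrow> tensor \<Rightarrow> vec \<Rightarrow> vec" where
  "tvec m n A x i = (\<Sum>is\<in>idx (m - 1) n. A (i # is) * prod_list (map x is))"

text \<open>Block structure n = n_1 + ... + n_r given by the list ns.
  Block i occupies components off ns i, ..., off ns i + ns!i - 1;
  its first component is x^i_circ, the remaining ones form x^i_bullet.\<close>
definition off :: "nat list \<Rightarrow> nat \<Rightarrow> nat" where
  "off ns i = sum_list (take i ns)"

definition xcirc :: "nat list \<Rightarrow> nat \<Rightarrow> vec \<Rightarrow> real" where
  "xcirc ns i x = x (off ns i)"

definition xbullet_norm :: "nat list \<Rightarrow> nat \<Rightarrow> vec \<Rightarrow> real" where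
  "xbullet_norm ns i x = sqrt (\<Sum>j\<in>{1..<ns!i}. (x (off ns i + j))\<^sup>2)"

definition inK :: "nat list \<Rightarrow> vec \<Rightarrow> bool" where
  "inK ns x \<longleftrightarrow> (\<forall>i<length ns. xcirc ns i x \<ge> xbullet_norm ns i x)"

definition nonzero :: "nat \<Rightarrow> vec \<Rightarrow> bool" where
  "nonzero n x \<longleftrightarrow> (\<exists>k<n. x k \<noteq> 0)"

definition inner_n :: "nat \<Rightarrow> vec \<Rightarrow> vec \<Rightarrow> real" where
  "inner_n n x y = (\<Sum>k<n. x k * y k)"

definition evec :: "nat list \<Rightarrow> vec" where
  "evec ns k = (if \<exists>i<length ns. k = off ns i then 1 else 0)"

definition gcon :: "nat list \<Rightarrow> nat \<Rightarrow> vec \<Rightarrow> real" where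
  "gcon ns i x = (xcirc ns i x)\<^sup>2 - (xbullet_norm ns i x)\<^sup>2"

definition hcon :: "nat list \<Rightarrow> nat \<Rightarrow> vec \<Rightarrow> real" where
  "hcon ns i x = xcirc ns i x"

definition lam :: "nat \<Rightarrow> nat \<Rightarrow> tensor \<Rightarrow> tensor \<Rightarrow> vec \<Rightarrow> real" where
  "lam m n A B x = tpow m n B x / tpow m n A x"

definition grad :: "(vec \<Rightarrow> real) \<Rightarrow> vec \<Rightarrow> nat \<Rightarrow> real" where
  "grad f x k = deriv (\<lambda>t. f (x(k := t))) (x k)"

definition feasible :: "nat list \<Rightarrow> vec \<Rightarrow> bool" where
  "feasible ns x \<longleftrightarrow>
     (\<forall>i<length ns. gcon ns i x \<ge> 0 \<and> hcon ns i x \<ge> 0) \<and>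
     inner_n (sum_list ns) (evec ns) x = 1"

definition stationary :: "nat \<Rightarrow> nat list \<Rightarrow> tensor \<Rightarrow> tensor \<Rightarrow> vec \<Rightarrow> bool" where
  "stationary m ns A B x \<longleftrightarrow> feasible ns x \<and>
     (\<exists>\<beta> \<gamma> :: nat \<Rightarrow> real. \<exists>\<delta> :: real.
        (\<forall>i<length ns. \<beta> i \<ge> 0 \<and> \<gamma> i \<ge> 0) \<and>
        (\<forall>k<sum_list ns.
           grad (lam m (sum_list ns) A B) x k
           + (\<Sum>i<length ns. \<beta> i * grad (gcon ns i) x k)
           + (\<Sum>i<length ns. \<gamma> i * grad (hcon ns i) x k)
           + \<delta> * evec ns k = 0) \<and>
        (\<forall>i<length ns. \<beta> i * gcon ns i x = 0 \<and> \<gamma> i * hcon ns i x = 0))"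

end

theory Submission
  imports Defs
begin

text \<open>For symmetric tensors the gradient of \<open>\<lambda>\<close> at \<open>x\<close> is \<open>-(m / \<A>x\<^sup>m) w\<close> with
  \<open>w = (\<lambda>(x)\<A> - \<B>)x\<^sup>m\<^sup>-\<^sup>1\<close>, and Euler's identity gives \<open>\<langle>x, w\<rangle> = 0\<close>. So the KKT system says that
  \<open>(m / \<A>x\<^sup>m) w = \<Sum>\<beta>\<^sub>i\<nabla>g\<^sub>i + \<Sum>\<gamma>\<^sub>i\<nabla>h\<^sub>i + \<delta>e\<close>. Pairing with \<open>x\<close>, Euler's identity for the homogeneous \<open>g\<^sub>i, h\<^sub>i\<close>
  and complementarity kill everything except \<open>\<delta> e\<^sup>Tx = \<delta>\<close>, hence \<open>\<delta> = 0\<close>. On block \<open>i\<close> the remaining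
  combination is \<open>2\<beta>\<^sub>i (x\<^sup>i\<^sub>\<circ>, -x\<^sup>i\<^sub>\<bullet>) + \<gamma>\<^sub>i e\<^sup>i\<close>, which lies in the second-order cone because \<open>x\<^sup>i\<close> does.\<close>

lemma idx_0: "idx 0 n = {[]}"
  unfolding idx_def by auto

lemma idx_Suc: "idx (Suc m) n = (\<lambda>(i, is). i # is) ` ({..<n} \<times> idx m n)"
  unfolding idx_def by (auto simp: length_Suc_conv image_iff)

lemma sum_idx_Suc: "(\<Sum>is\<in>idx (Suc m) n. f is) = (\<Sum>i<n. \<Sum>is\<in>idx m n. f (i # is))"
proof -
  have "inj_on (\<lambda>(i, is). i # is) ({..<n} \<times> idx m n)"
    by (auto simp: inj_on_def)
  then have "(\<Sum>is\<in>idx (Suc m) n. f is) = (\<Sum>(i, is)\<in>{..<n} \<times> idx m n. f (i # is))"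
    unfolding idx_Suc by (simp add: sum.reindex split_def)
  also have "\<dots> = (\<Sum>i<n. \<Sum>is\<in>idx m n. f (i # is))"
    by (simp add: sum.cartesian_product split_def)
  finally show ?thesis .
qed

lemma tpow_0: "tpow 0 n A x = A []"
  unfolding tpow_def idx_0 by simp

lemma tpow_Suc: "tpow (Suc m) n A x = (\<Sum>i<n. x i * tpow m n (\<lambda>is. A (i # is)) x)"
  unfolding tpow_def sum_idx_Suc by (simp add: sum_distrib_left mult_ac)

lemma tvec_Suc: "tvec (Suc m) n A x k = tpow m n (\<lambda>is. A (k # is)) x"
  unfolding tvec_def tpow_def by simp

lemma sum_mult_tvec_eq_tpow: "1 \<le> m \<Longrightarrow> (\<Sum>k<n. x k * tvec m n A x k) = tpow m n A x"
  by (cases m) (auto simp: tpow_Suc tvec_Suc)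

lemma symmetric_tensor_Cons:
  "symmetric_tensor (Suc m) n A \<Longrightarrow> i < n \<Longrightarrow> symmetric_tensor m n (\<lambda>is. A (i # is))"
  unfolding symmetric_tensor_def idx_def by auto

lemma symmetric_tensor_swap:
  assumes "symmetric_tensor (Suc (Suc m)) n A" "i < n" "k < n" "is \<in> idx m n"
  shows "A (i # k # is) = A (k # i # is)"
proof -
  have "i # k # is \<in> idx (Suc (Suc m)) n" "k # i # is \<in> idx (Suc (Suc m)) n"
    using assms(2-4) by (auto simp: idx_def)
  moreover have "mset (i # k # is) = mset (k # i # is)"
    by (simp add: add_mset_commute)
  ultimately show ?thesis
    using assms(1) unfolding symmetric_tensor_def by blast
qed

lemma sum_mult_tvec_Cons:
  assumes "symmetric_tensor (Suc (Suc m)) n A" "k < n"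
  shows "(\<Sum>i<n. x i * tvec (Suc m) n (\<lambda>is. A (i # is)) x k) = tpow (Suc m) n (\<lambda>is. A (k # is)) x"
proof -
  have "(\<Sum>i<n. x i * tvec (Suc m) n (\<lambda>is. A (i # is)) x k)
      = (\<Sum>i<n. x i * tpow m n (\<lambda>is. A (k # i # is)) x)"
    unfolding tvec_Suc tpow_def using symmetric_tensor_swap[OF assms(1) _ assms(2)]
    by (intro sum.cong refl arg_cong2[where f = "(*)"]) auto
  then show ?thesis
    by (simp add: tpow_Suc)
qed

lemma has_real_derivative_tpow:
  assumes "symmetric_tensor m n A" "k < n"
  shows "((\<lambda>t. tpow m n A (x(k := t))) has_real_derivative real m * tvec m n A x k) (at (x k))"
  using assms
proof (induction m arbitrary: A)
  case 0
  then show ?case by (simp add: tpow_0)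
next
  case (Suc m)
  let ?A = "\<lambda>i is. A (i # is)"
  have coord: "((\<lambda>t. (x(k := t)) i) has_real_derivative (if i = k then 1 else 0)) (at (x k))" for i
    by (cases "i = k") auto
  let ?D = "\<Sum>i<n. (if i = k then 1 else 0) * tpow m n (?A i) x + real m * tvec m n (?A i) x k * x i"
  have deriv: "((\<lambda>t. tpow (Suc m) n A (x(k := t))) has_real_derivative ?D) (at (x k))"
    unfolding tpow_Suc
  proof (rule DERIV_sum)
    fix i assume "i \<in> {..<n}"
    then show "((\<lambda>t. (x(k := t)) i * tpow m n (?A i) (x(k := t))) has_real_derivative
        (if i = k then 1 else 0) * tpow m n (?A i) x + real m * tvec m n (?A i) x k * x i) (at (x k))"
      using DERIV_mult[OF coord Suc.IH[OF symmetric_tensor_Cons[OF Suc.prems(1)] Suc.prems(2)]]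
      by (simp only: fun_upd_triv lessThan_iff)
  qed
  have "(\<Sum>i<n. (if i = k then 1 else 0) * tpow m n (?A i) x) = tpow m n (?A k) x"
    using Suc.prems(2) by (simp add: mult_if_delta)
  moreover have "(\<Sum>i<n. real m * tvec m n (?A i) x k * x i) = real m * (\<Sum>i<n. x i * tvec m n (?A i) x k)"
    by (simp add: sum_distrib_left mult.commute mult.left_commute)
  ultimately have "?D = tpow m n (?A k) x + real m * (\<Sum>i<n. x i * tvec m n (?A i) x k)"
    by (simp only: sum.distrib)
  also have "\<dots> = real (Suc m) * tvec (Suc m) n A x k"
    using sum_mult_tvec_Cons[of "m - 1" n A k x] Suc.prems by (cases m) (simp_all add: tvec_Suc algebra_simps)
  finally show ?case
    using deriv by (simp only:)
qed

definition eigen_residual :: "nat \<Rightarrow> nat \<Rightarrow> tensor \<Rightarrow> tensor \<Rightarrow> vec \<Rightarrow> vec" where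
  "eigen_residual m n A B x k = lam m n A B x * tvec m n A x k - tvec m n B x k"

lemma grad_lam:
  assumes "symmetric_tensor m n A" "symmetric_tensor m n B" "k < n" "tpow m n A x \<noteq> 0"
  shows "grad (lam m n A B) x k = - (real m / tpow m n A x) * eigen_residual m n A B x k"
proof -
  have "((\<lambda>t. tpow m n B (x(k := t)) / tpow m n A (x(k := t))) has_real_derivative
      (real m * tvec m n B x k * tpow m n A x - tpow m n B x * (real m * tvec m n A x k))
        / (tpow m n A x * tpow m n A x)) (at (x k))"
    using DERIV_divide[OF has_real_derivative_tpow[OF assms(2,3), where x = x]
        has_real_derivative_tpow[OF assms(1,3), where x = x]]
      assms(4) by simp
  then have "grad (lam m n A B) x k = (real m * tvec m n B x k * tpow m n A x - tpow m n B x * (real m * tvec m n A x k))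
      / (tpow m n A x * tpow m n A x)"
    unfolding grad_def lam_def by (rule DERIV_imp_deriv)
  also have "\<dots> = - (real m / tpow m n A x) * eigen_residual m n A B x k"
    using assms(4) by (simp add: eigen_residual_def lam_def field_simps)
  finally show ?thesis .
qed

lemma inner_n_eigen_residual:
  assumes "1 \<le> m" "tpow m n A x \<noteq> 0"
  shows "inner_n n x (eigen_residual m n A B x) = 0"
proof -
  have "inner_n n x (eigen_residual m n A B x)
      = lam m n A B x * (\<Sum>k<n. x k * tvec m n A x k) - (\<Sum>k<n. x k * tvec m n B x k)"
    by (simp add: inner_n_def eigen_residual_def sum_distrib_left sum_subtractf algebra_simps)
  also have "\<dots> = 0"
    using assms by (simp add: sum_mult_tvec_eq_tpow lam_def)
  finally show ?thesis .
qed

definition block :: "nat list \<Rightarrow> nat \<Rightarrow> nat set" where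
  "block ns i = {off ns i..<off ns i + ns ! i}"

lemma off_Suc: "i < length ns \<Longrightarrow> off ns (Suc i) = off ns i + ns ! i"
  unfolding off_def by (simp add: take_Suc_conv_app_nth)

lemma off_mono:
  assumes "i \<le> j"
  shows "off ns i \<le> off ns j"
proof -
  obtain d where "j = i + d"
    using assms le_Suc_ex by blast
  then show ?thesis
    by (simp add: off_def take_add)
qed

lemma block_subset_lessThan:
  assumes "i < length ns"
  shows "block ns i \<subseteq> {..<sum_list ns}"
proof -
  have "off ns i + ns ! i \<le> off ns (length ns)"
    using off_mono[of "Suc i" "length ns" ns] assms by (simp add: off_Suc)
  then show ?thesis
    by (auto simp: block_def off_def)
qed

lemma block_unique:
  assumes "i < length ns" "l < length ns" "k \<in> block ns i" "k \<in> block ns l"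
  shows "i = l"
proof -
  have disjoint: "k \<notin> block ns b" if "a < b" "b < length ns" "k \<in> block ns a" for a b
  proof -
    have "off ns a + ns ! a \<le> off ns b"
      using off_mono[of "Suc a" b ns] off_Suc[of a ns] that(1,2) by simp
    then show ?thesis
      using that(3) by (simp add: block_def)
  qed
  show ?thesis
  proof (rule linorder_cases[of i l])
    assume "i < l"
    then show ?thesis
      using disjoint[of i l] assms(2-4) by blast
  next
    assume "l < i"
    then show ?thesis
      using disjoint[of l i] assms(1,3,4) by blast
  qed
qed

lemma off_in_block: "0 < ns ! i \<Longrightarrow> off ns i \<in> block ns i"
  by (simp add: block_def)

lemma sum_block_indicator:
  assumes "i < length ns" "k \<in> block ns i"
  shows "(\<Sum>l<length ns. if k \<in> block ns l then f l else 0) = f i"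
proof -
  have "(if k \<in> block ns l then f l else 0) = (if l = i then f l else 0)" if "l < length ns" for l
  proof (cases "l = i")
    case False
    then have "k \<notin> block ns l"
      using block_unique[of l ns i k] that assms by blast
    with False show ?thesis
      by simp
  qed (use assms in simp)
  then have "(\<Sum>l<length ns. if k \<in> block ns l then f l else 0) = (\<Sum>l<length ns. if l = i then f l else 0)"
    by (intro sum.cong) auto
  then show ?thesis
    using assms(1) by simp
qed

definition lorentz_sign :: "nat list \<Rightarrow> nat \<Rightarrow> nat \<Rightarrow> real" where
  "lorentz_sign ns i k = (if k = off ns i then 1 else -1)"

lemma gcon_eq_sum_block:
  assumes "0 < ns ! i"
  shows "gcon ns i x = (\<Sum>k\<in>block ns i. lorentz_sign ns i k * (x k)\<^sup>2)"
proof -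
  define p where "p = off ns i"
  define N where "N = ns ! i"
  have bullet: "(xbullet_norm ns i x)\<^sup>2 = (\<Sum>j\<in>{1..<N}. (x (p + j))\<^sup>2)"
    unfolding xbullet_norm_def p_def N_def by (simp add: sum_nonneg)
  have "(\<Sum>k\<in>block ns i. lorentz_sign ns i k * (x k)\<^sup>2)
      = lorentz_sign ns i p * (x p)\<^sup>2 + (\<Sum>k\<in>{Suc p..<p + N}. lorentz_sign ns i k * (x k)\<^sup>2)"
    unfolding block_def p_def[symmetric] N_def[symmetric] using assms N_def
    by (subst sum.atLeast_Suc_lessThan) auto
  also have "(\<Sum>k\<in>{Suc p..<p + N}. lorentz_sign ns i k * (x k)\<^sup>2)
      = (\<Sum>j\<in>{1..<N}. lorentz_sign ns i (j + p) * (x (j + p))\<^sup>2)"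
    using sum.shift_bounds_nat_ivl[of "\<lambda>k. lorentz_sign ns i k * (x k)\<^sup>2" 1 p N]
    by (simp add: add.commute)
  also have "\<dots> = - (\<Sum>j\<in>{1..<N}. (x (p + j))\<^sup>2)"
    by (simp add: lorentz_sign_def p_def sum_negf add.commute)
  finally show ?thesis
    unfolding gcon_def bullet by (simp add: p_def lorentz_sign_def xcirc_def)
qed

lemma has_real_derivative_weighted_sum_squares:
  assumes "finite S"
  shows "((\<lambda>t. \<Sum>j\<in>S. c j * ((x(k := t)) j)\<^sup>2) has_real_derivative
    (if k \<in> S then 2 * c k * x k else 0)) (at (x k))"
proof -
  have "((\<lambda>t. c j * ((x(k := t)) j)\<^sup>2) has_real_derivative (if j = k then 2 * c k * x k else 0)) (at (x k))" for j
  proof (cases "j = k")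
    case True
    have "((\<lambda>t. c k * t\<^sup>2) has_real_derivative c k * (2 * x k)) (at (x k))"
      by (auto intro!: derivative_eq_intros)
    then show ?thesis
      using True by (simp add: mult_ac)
  qed simp
  then have "((\<lambda>t. \<Sum>j\<in>S. c j * ((x(k := t)) j)\<^sup>2) has_real_derivative
      (\<Sum>j\<in>S. if j = k then 2 * c k * x k else 0)) (at (x k))"
    by (rule DERIV_sum)
  then show ?thesis
    using assms by (simp add: sum.delta')
qed

lemma grad_gcon:
  "0 < ns ! i \<Longrightarrow>
    grad (gcon ns i) x k = (if k \<in> block ns i then 2 * lorentz_sign ns i k * x k else 0)"
  unfolding grad_def gcon_eq_sum_block
  by (rule DERIV_imp_deriv[OF has_real_derivative_weighted_sum_squares]) (simp add: block_def)

lemma grad_hcon: "grad (hcon ns i) x k = (if k = off ns i then 1 else 0)"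
proof -
  have "((\<lambda>t. (x(k := t)) (off ns i)) has_real_derivative (if k = off ns i then 1 else 0)) (at (x k))"
    by (cases "k = off ns i") auto
  then show ?thesis
    unfolding grad_def hcon_def xcirc_def by (rule DERIV_imp_deriv)
qed

lemma sum_mult_grad_gcon:
  assumes "i < length ns" "0 < ns ! i"
  shows "(\<Sum>k<sum_list ns. x k * grad (gcon ns i) x k) = 2 * gcon ns i x"
proof -
  have "(\<Sum>k<sum_list ns. x k * grad (gcon ns i) x k)
      = (\<Sum>k<sum_list ns. if k \<in> block ns i then 2 * (lorentz_sign ns i k * (x k)\<^sup>2) else 0)"
    using assms(2) by (intro sum.cong) (auto simp: grad_gcon power2_eq_square)
  also have "\<dots> = (\<Sum>k\<in>block ns i. 2 * (lorentz_sign ns i k * (x k)\<^sup>2))"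
    using block_subset_lessThan[OF assms(1)] by (simp add: sum.inter_restrict[symmetric] Int_absorb1)
  finally show ?thesis
    using assms(2) by (simp add: gcon_eq_sum_block sum_distrib_left)
qed

lemma sum_mult_grad_hcon:
  assumes "i < length ns" "0 < ns ! i"
  shows "(\<Sum>k<sum_list ns. x k * grad (hcon ns i) x k) = hcon ns i x"
proof -
  have "off ns i < sum_list ns"
    using block_subset_lessThan[OF assms(1)] off_in_block[OF assms(2)] by auto
  then show ?thesis
    by (simp add: grad_hcon hcon_def xcirc_def if_distrib[of "(*) (x _)"] cong: if_cong)
qed

lemma nonzero_if_inner_n_nonzero: "inner_n n y x \<noteq> 0 \<Longrightarrow> nonzero n x"
  unfolding inner_n_def nonzero_def by (metis (no_types, lifting) lessThan_iff mult_zero_right sum.neutral)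

lemma feasible_imp_inK: "feasible ns x \<Longrightarrow> inK ns x"
  unfolding feasible_def inK_def gcon_def hcon_def
  by (meson diff_ge_0_iff_ge power2_le_imp_le)

lemma xbullet_norm_cong:
  "(\<And>j. j \<in> {1..<ns ! i} \<Longrightarrow> x (off ns i + j) = y (off ns i + j)) \<Longrightarrow>
    xbullet_norm ns i x = xbullet_norm ns i y"
  unfolding xbullet_norm_def by (metis (no_types, lifting) sum.cong)

lemma xbullet_norm_scale: "xbullet_norm ns i (\<lambda>k. c * x k) = \<bar>c\<bar> * xbullet_norm ns i x"
  by (simp add: xbullet_norm_def power_mult_distrib sum_distrib_left[symmetric] real_sqrt_mult)

lemma inK_cong:
  assumes "\<forall>i<length ns. 0 < ns ! i" "\<forall>k<sum_list ns. x k = y k"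
  shows "inK ns x \<longleftrightarrow> inK ns y"
proof -
  have "xcirc ns i x = xcirc ns i y \<and> xbullet_norm ns i x = xbullet_norm ns i y" if i: "i < length ns" for i
  proof -
    have on_block: "x k = y k" if "k \<in> block ns i" for k
      using block_subset_lessThan[OF i] assms(2) that by blast
    have "xcirc ns i x = xcirc ns i y"
      using on_block[OF off_in_block] assms(1) i by (simp add: xcirc_def)
    moreover have "xbullet_norm ns i x = xbullet_norm ns i y"
      by (rule xbullet_norm_cong) (simp add: on_block block_def)
    ultimately show ?thesis ..
  qed
  then show ?thesis
    unfolding inK_def by simp
qed

lemma inK_scale:
  assumes "0 \<le> c" "inK ns x"
  shows "inK ns (\<lambda>k. c * x k)"
  using assms unfolding inK_def by (simp add: xbullet_norm_scale xcirc_def mult_left_mono)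

definition cone_gradient_comb :: "nat list \<Rightarrow> (nat \<Rightarrow> real) \<Rightarrow> (nat \<Rightarrow> real) \<Rightarrow> vec \<Rightarrow> vec" where
  "cone_gradient_comb ns \<beta> \<gamma> x k =
    (\<Sum>l<length ns. \<beta> l * grad (gcon ns l) x k + \<gamma> l * grad (hcon ns l) x k)"

lemma cone_gradient_comb_at_block:
  assumes "\<forall>l<length ns. 0 < ns ! l" "i < length ns" "k \<in> block ns i"
  shows "cone_gradient_comb ns \<beta> \<gamma> x k
    = 2 * \<beta> i * lorentz_sign ns i k * x k + (if k = off ns i then \<gamma> i else 0)"
proof -
  have "\<beta> l * grad (gcon ns l) x k + \<gamma> l * grad (hcon ns l) x k
      = (if k \<in> block ns l then 2 * \<beta> l * lorentz_sign ns l k * x k + (if k = off ns l then \<gamma> l else 0) else 0)"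
    if l: "l < length ns" for l
  proof -
    have "k = off ns l \<Longrightarrow> k \<in> block ns l"
      using off_in_block assms(1) l by blast
    then show ?thesis
      using assms(1) l by (simp add: grad_gcon grad_hcon)
  qed
  then have "cone_gradient_comb ns \<beta> \<gamma> x k
      = (\<Sum>l<length ns. if k \<in> block ns l
          then 2 * \<beta> l * lorentz_sign ns l k * x k + (if k = off ns l then \<gamma> l else 0) else 0)"
    unfolding cone_gradient_comb_def by (intro sum.cong) simp_all
  also have "\<dots> = 2 * \<beta> i * lorentz_sign ns i k * x k + (if k = off ns i then \<gamma> i else 0)"
    by (rule sum_block_indicator[OF assms(2,3)])
  finally show ?thesis .
qed

lemma inK_cone_gradient_comb:
  assumes "\<forall>l<length ns. 0 < ns ! l" "inK ns x" "\<forall>l<length ns. 0 \<le> \<beta> l \<and> 0 \<le> \<gamma> l"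
  shows "inK ns (cone_gradient_comb ns \<beta> \<gamma> x)"
  unfolding inK_def
proof (intro allI impI)
  fix i assume i: "i < length ns"
  let ?v = "cone_gradient_comb ns \<beta> \<gamma> x"
  have circ: "xcirc ns i ?v = 2 * \<beta> i * xcirc ns i x + \<gamma> i"
    using cone_gradient_comb_at_block[OF assms(1) i off_in_block] assms(1) i
    by (simp add: xcirc_def lorentz_sign_def)
  have "?v (off ns i + j) = - (2 * \<beta> i) * x (off ns i + j)" if "j \<in> {1..<ns ! i}" for j
    using cone_gradient_comb_at_block[OF assms(1) i, of "off ns i + j"] that
    by (simp add: block_def lorentz_sign_def)
  then have "xbullet_norm ns i ?v = xbullet_norm ns i (\<lambda>k. - (2 * \<beta> i) * x k)"
    by (rule xbullet_norm_cong)
  also have "\<dots> = 2 * \<beta> i * xbullet_norm ns i x"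
    using xbullet_norm_scale[of ns i "- (2 * \<beta> i)" x] assms(3) i by simp
  also have "\<dots> \<le> 2 * \<beta> i * xcirc ns i x"
    using assms(2,3) i unfolding inK_def by (simp add: mult_left_mono)
  also have "\<dots> \<le> xcirc ns i ?v"
    using circ assms(3) i by simp
  finally show "xbullet_norm ns i ?v \<le> xcirc ns i ?v" .
qed

lemma sum_mult_cone_gradient_comb:
  assumes "\<forall>l<length ns. 0 < ns ! l"
  shows "(\<Sum>k<sum_list ns. x k * cone_gradient_comb ns \<beta> \<gamma> x k)
    = (\<Sum>l<length ns. 2 * \<beta> l * gcon ns l x + \<gamma> l * hcon ns l x)"
proof -
  have "(\<Sum>k<sum_list ns. x k * cone_gradient_comb ns \<beta> \<gamma> x k)
      = (\<Sum>l<length ns. \<beta> l * (\<Sum>k<sum_list ns. x k * grad (gcon ns l) x k)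
          + \<gamma> l * (\<Sum>k<sum_list ns. x k * grad (hcon ns l) x k))"
    unfolding cone_gradient_comb_def
    by (simp add: sum_distrib_left sum.distrib algebra_simps sum.swap[of _ "{..<sum_list ns}"])
  also have "\<dots> = (\<Sum>l<length ns. 2 * \<beta> l * gcon ns l x + \<gamma> l * hcon ns l x)"
    using assms by (intro sum.cong) (simp_all add: sum_mult_grad_gcon sum_mult_grad_hcon)
  finally show ?thesis .
qed

lemma stationary_kkt_eigen_residual:
  fixes ns :: "nat list" and x :: vec
  defines "n \<equiv> sum_list ns"
  assumes "stationary m ns A B x" "symmetric_tensor m n A" "symmetric_tensor m n B"
    and "tpow m n A x \<noteq> 0"
  obtains \<beta> \<gamma> \<delta> where "\<forall>l<length ns. 0 \<le> \<beta> l \<and> 0 \<le> \<gamma> l"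
    and "\<forall>l<length ns. \<beta> l * gcon ns l x = 0 \<and> \<gamma> l * hcon ns l x = 0"
    and "\<forall>k<n. real m / tpow m n A x * eigen_residual m n A B x k
      = cone_gradient_comb ns \<beta> \<gamma> x k + \<delta> * evec ns k"
proof -
  obtain \<beta> \<gamma> \<delta> where sign: "\<forall>l<length ns. 0 \<le> \<beta> l \<and> 0 \<le> \<gamma> l"
    and kkt: "\<forall>k<n. grad (lam m n A B) x k + (\<Sum>l<length ns. \<beta> l * grad (gcon ns l) x k)
      + (\<Sum>l<length ns. \<gamma> l * grad (hcon ns l) x k) + \<delta> * evec ns k = 0"
    and compl: "\<forall>l<length ns. \<beta> l * gcon ns l x = 0 \<and> \<gamma> l * hcon ns l x = 0"
    using assms(2) unfolding stationary_def n_def by blast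
  have "real m / tpow m n A x * eigen_residual m n A B x k = cone_gradient_comb ns \<beta> \<gamma> x k + \<delta> * evec ns k"
    if "k < n" for k
    using grad_lam[OF assms(3,4) that assms(5)] kkt[rule_format, OF that]
    by (simp add: cone_gradient_comb_def sum.distrib)
  with sign compl show ?thesis
    using that by blast
qed

lemma stationary_imp_eigen_residual_eq:
  fixes ns :: "nat list" and x :: vec
  defines "n \<equiv> sum_list ns"
  assumes "stationary m ns A B x" "symmetric_tensor m n A" "symmetric_tensor m n B"
    and "1 \<le> m" "\<forall>l<length ns. 0 < ns ! l" "0 < tpow m n A x"
  obtains \<beta> \<gamma> where "\<forall>l<length ns. 0 \<le> \<beta> l \<and> 0 \<le> \<gamma> l"
    and "\<forall>k<n. eigen_residual m n A B x k = tpow m n A x / real m * cone_gradient_comb ns \<beta> \<gamma> x k"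
proof -
  define a where "a = tpow m n A x"
  define w where "w = eigen_residual m n A B x"
  have a: "0 < a" "0 < real m"
    using assms(5,7) by (simp_all add: a_def)
  have tpos: "tpow m (sum_list ns) A x \<noteq> 0"
    using a(1) by (simp add: a_def n_def)
  obtain \<beta> \<gamma> \<delta> where sign: "\<forall>l<length ns. 0 \<le> \<beta> l \<and> 0 \<le> \<gamma> l"
    and compl: "\<forall>l<length ns. \<beta> l * gcon ns l x = 0 \<and> \<gamma> l * hcon ns l x = 0"
    and kkt: "\<forall>k<n. real m / tpow m n A x * eigen_residual m n A B x k
      = cone_gradient_comb ns \<beta> \<gamma> x k + \<delta> * evec ns k"
    by (rule stationary_kkt_eigen_residual[OF assms(2) assms(3,4)[unfolded n_def] tpos, folded n_def])
  have residual: "real m / a * w k = cone_gradient_comb ns \<beta> \<gamma> x k + \<delta> * evec ns k" if "k < n" for k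
    using kkt that by (simp add: a_def w_def)
  have "(\<Sum>l<length ns. 2 * \<beta> l * gcon ns l x + \<gamma> l * hcon ns l x) = 0"
    by (intro sum.neutral) (simp add: compl mult.assoc)
  then have comb: "(\<Sum>k<n. x k * cone_gradient_comb ns \<beta> \<gamma> x k) = 0"
    using sum_mult_cone_gradient_comb[OF assms(6)] by (simp add: n_def)
  have "real m / a * inner_n n x w = (\<Sum>k<n. x k * (real m / a * w k))"
    by (simp add: inner_n_def sum_distrib_left mult_ac)
  also have "\<dots> = (\<Sum>k<n. x k * (cone_gradient_comb ns \<beta> \<gamma> x k + \<delta> * evec ns k))"
    by (intro sum.cong refl) (simp only: residual lessThan_iff)
  also have "\<dots> = \<delta> * inner_n n (evec ns) x"
    using comb by (simp add: distrib_left sum.distrib sum_distrib_left inner_n_def mult_ac)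
  also have "\<dots> = \<delta>"
    using assms(2) by (simp add: stationary_def feasible_def n_def)
  finally have "\<delta> = 0"
    using inner_n_eigen_residual[of m n A x B] assms(5) a by (simp add: w_def a_def)
  then have "\<forall>k<n. w k = a / real m * cone_gradient_comb ns \<beta> \<gamma> x k"
    using residual a by (simp add: field_simps)
  then show ?thesis
    using that[OF sign] by (simp add: w_def a_def)
qed

theorem theorem2:
  fixes m :: nat and ns :: "nat list" and A B :: tensor and xb :: vec
  defines "n \<equiv> sum_list ns"
  assumes m: "m \<ge> 1"
    and r: "ns \<noteq> []"
    and blocks: "\<forall>i<length ns. ns ! i \<ge> 1"
    and symA: "symmetric_tensor m n A"
    and symB: "symmetric_tensor m n B"
    and posA: "\<forall>x. inK ns x \<and> nonzero n x \<longrightarrow> tpow m n A x > 0"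
    and stat: "stationary m ns A B xb"
  shows "nonzero n xb \<and> inK ns xb \<and>
         (let w = (\<lambda>k. lam m n A B xb * tvec m n A xb k - tvec m n B xb k)
          in inK ns w \<and> inner_n n xb w = 0)"
proof -
  have blocks': "\<forall>i<length ns. 0 < ns ! i"
    using blocks by auto
  have feas: "feasible ns xb"
    using stat by (simp add: stationary_def)
  have xK: "inK ns xb"
    using feas by (rule feasible_imp_inK)
  have nz: "nonzero n xb"
    using feas by (intro nonzero_if_inner_n_nonzero[of n "evec ns"]) (simp add: feasible_def n_def)
  have pos: "0 < tpow m n A xb"
    using posA xK nz by blast
  obtain \<beta> \<gamma> where sign: "\<forall>l<length ns. 0 \<le> \<beta> l \<and> 0 \<le> \<gamma> l"
    and residual: "\<forall>k<n. eigen_residual m n A B xb k = tpow m n A xb / real m * cone_gradient_comb ns \<beta> \<gamma> xb k"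
    by (rule stationary_imp_eigen_residual_eq[OF stat symA[unfolded n_def] symB[unfolded n_def] m blocks'
          pos[unfolded n_def], folded n_def])
  have "inK ns (\<lambda>k. tpow m n A xb / real m * cone_gradient_comb ns \<beta> \<gamma> xb k)"
    using pos by (intro inK_scale inK_cone_gradient_comb[OF blocks' xK sign]) simp
  moreover have "inK ns (eigen_residual m n A B xb)
      \<longleftrightarrow> inK ns (\<lambda>k. tpow m n A xb / real m * cone_gradient_comb ns \<beta> \<gamma> xb k)"
    using residual by (intro inK_cong[OF blocks']) (simp add: n_def)
  ultimately have "inK ns (eigen_residual m n A B xb)"
    by simp
  moreover have "inner_n n xb (eigen_residual m n A B xb) = 0"
    using inner_n_eigen_residual[OF m] pos by simp
  moreover have "(\<lambda>k. lam m n A B xb * tvec m n A xb k - tvec m n B xb k) = eigen_residual m n A B xb"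
    by (simp add: fun_eq_iff eigen_residual_def)
  ultimately show ?thesis
    using nz xK by (simp add: Let_def)
qed

end
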